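(* In the supercuspidal setting below, let $p$ be odd and $k\ge c_0+1$. If $p\mid a_1a_2a_3$, then $\widehat H(\psi,a_1,a_2,a_3)=0$ for every Dirichlet character $\psi$ modulo $p^k$.
   Context: Supercuspidal setting: $p$ is a prime, $L/\mathbb Q_p$ a quadratic extension with ring of integers $\mathcal O_L$, ramification index $e\in\{1,2\}$, $d=v_p(\mathrm{disc}(L/\mathbb Q_p))$; $\eta_L$ is the nontrivial quadratic character of $\mathbb Q_p^\times$ trivial on $\mathrm{Nm}(L^\times)$. $\xi$ is a character of $L^\times$ with $\xi\neq\xi\circ(\text{Galois conjugation})$ and $\xi|_{\mathbb Q_p^\times}=\eta_L$ (for $p$ odd, $(L/\mathbb Q_p,\xi)$ is an admissible pair, i.e. corresponds to a trivial central character dihedral supercuspidal representation of $\mathrm{PGL}_2(\mathbb Q_p)$). $c(\xi)$ is its conductor exponent and $c_0=c(\xi)/e$ (a positive integer). Set $\kappa=c_0$ if $p$ odd and $L$ unramified, $\kappa=c_0+1$ if $p$ odd and $L$ ramified; for $p=2$, $\kappa=c_0+199,c_0+101,c_0+102$ according as $d=0,2,3$. Let $\gamma$ be a fixed complex number of modulus $1$ depending only on $L$. For integers $m,n$ and $k\ge1$, $$H(m,n;p^k)=\overline\gamma\,p^{-d/2}\sum_{\substack{t\in(\mathcal O_L/p^k\mathcal O_L)^\times\\ \mathrm{Nm}(t)\equiv mn\ (p^k)}}\xi(t)\,e_{p^k}(-\mathrm{Tr}(t))$$ if $k\ge\kappa$ and $p\nmid mn$, and $H(m,n;p^k)=0$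 otherwise. For a Dirichlet character $\psi$ mod $p^k$ and integers $a_1,a_2,a_3$, $$\widehat H(\psi,a_1,a_2,a_3)=p^{-2k}\sum_{u,x_1,x_2,x_3\bmod p^k}\overline\psi(u)H(\overline u x_1x_2x_3,1;p^k)\,e_{p^k}(a_1x_1+a_2x_2+a_3x_3-ua_1a_2a_3).$$ Here $e_q(x)=\exp(2\pi i x/q)$ (extended $p$-adically), $\overline u$ is the inverse mod $p^k$, and Dirichlet characters vanish on non-units. *)

theory Defs
  imports "HOL-Analysis.Analysis" "HOL-Number_Theory.Number_Theory"
begin

text \<open>
  The quadratic extension L of Q_p is Q_p(sqrt D), where the
  integer D is either a p-adic unit that is a non-square mod p (L unramified) or exactly
  divisible by p (L ramified).  Then O_L = Z_p[sqrt D].  An element a + b sqrt D of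
  Z[sqrt D] (dense in O_L, and generating a dense subgroup Q(sqrt D)^* of L^*) is
  represented by the pair (a, b).
\<close>

type_synonym zsq = "int \<times> int"

definition zmul :: "int \<Rightarrow> zsq \<Rightarrow> zsq \<Rightarrow> zsq" where
  "zmul D x y = (fst x * fst y + D * snd x * snd y, fst x * snd y + snd x * fst y)"

definition nrm :: "int \<Rightarrow> zsq \<Rightarrow> int" where
  "nrm D x = (fst x)^2 - D * (snd x)^2"

definition trc :: "zsq \<Rightarrow> int" where
  "trc x = 2 * fst x"

definition gal :: "zsq \<Rightarrow> zsq" where
  "gal x = (fst x, - snd x)"

definition quad_param :: "nat \<Rightarrow> int \<Rightarrow> bool" where
  "quad_param p D \<longleftrightarrow>
     (\<not> int p dvd D \<and> \<not> QuadRes (int p) D) \<or> (int p dvd D \<and> \<not> (int p)^2 dvd D)"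

definition ram_index :: "nat \<Rightarrow> int \<Rightarrow> nat" where
  "ram_index p D = (if int p dvd D then 2 else 1)"

text \<open>d = v_p of the discriminant of O_L = Z_p[sqrt D] (discriminant 4D).\<close>
definition disc_exp :: "nat \<Rightarrow> int \<Rightarrow> nat" where
  "disc_exp p D = multiplicity (int p) (4 * D)"

definition vL :: "nat \<Rightarrow> int \<Rightarrow> zsq \<Rightarrow> nat" where
  "vL p D x = (ram_index p D * multiplicity (int p) (nrm D x)) div 2"

text \<open>Membership of a nonzero element of Z[sqrt D] in U_L^c = 1 + varpi^c O_L
  (with U_L^0 = O_L^*).\<close>
definition in_U :: "nat \<Rightarrow> int \<Rightarrow> nat \<Rightarrow> zsq \<Rightarrow> bool" where
  "in_U p D c x \<longleftrightarrow> x \<noteq> (0, 0) \<and>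
     (if c = 0 then vL p D x = 0
      else (x = (1, 0) \<or> c \<le> vL p D (fst x - 1, snd x)))"

text \<open>A smooth (locally constant) character of L^*, given by its restriction to the
  nonzero elements of Z[sqrt D] (this determines it uniquely).\<close>
definition smooth_char :: "nat \<Rightarrow> int \<Rightarrow> (zsq \<Rightarrow> complex) \<Rightarrow> bool" where
  "smooth_char p D \<xi> \<longleftrightarrow>
     (\<forall>x y. x \<noteq> (0, 0) \<longrightarrow> y \<noteq> (0, 0) \<longrightarrow> \<xi> (zmul D x y) = \<xi> x * \<xi> y) \<and>
     (\<forall>x. x \<noteq> (0, 0) \<longrightarrow> \<xi> x \<noteq> 0) \<and>
     (\<exists>c. \<forall>x. in_U p D c x \<longrightarrow> \<xi> x = 1)"

definition conductor :: "nat \<Rightarrow> int \<Rightarrow> (zsq \<Rightarrow> complex) \<Rightarrow> nat" where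
  "conductor p D \<xi> = (LEAST c. \<forall>x. in_U p D c x \<longrightarrow> \<xi> x = 1)"

text \<open>eta_L: the nontrivial (smooth) character of Q_p^* trivial on Nm(L^*), given by its
  restriction to the nonzero integers.\<close>
definition is_eta_L :: "nat \<Rightarrow> int \<Rightarrow> (int \<Rightarrow> complex) \<Rightarrow> bool" where
  "is_eta_L p D \<eta> \<longleftrightarrow>
     (\<forall>m n. m \<noteq> 0 \<longrightarrow> n \<noteq> 0 \<longrightarrow> \<eta> (m * n) = \<eta> m * \<eta> n) \<and>
     (\<forall>n. n \<noteq> 0 \<longrightarrow> \<eta> n \<noteq> 0) \<and>
     (\<exists>N. \<forall>n. n \<noteq> 0 \<longrightarrow> [n = 1] (mod (int p ^ N)) \<longrightarrow> \<eta> n = 1) \<and>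
     (\<forall>z. z \<noteq> (0, 0) \<longrightarrow> \<eta> (nrm D z) = 1) \<and>
     (\<exists>n. n \<noteq> 0 \<and> \<eta> n \<noteq> 1)"

definition dirichlet_char :: "nat \<Rightarrow> (int \<Rightarrow> complex) \<Rightarrow> bool" where
  "dirichlet_char q \<psi> \<longleftrightarrow>
     (\<forall>a. \<psi> (a + int q) = \<psi> a) \<and>
     (\<forall>a b. \<psi> (a * b) = \<psi> a * \<psi> b) \<and>
     \<psi> 1 = 1 \<and>
     (\<forall>a. \<not> coprime a (int q) \<longrightarrow> \<psi> a = 0)"

definition ep :: "nat \<Rightarrow> int \<Rightarrow> complex" where
  "ep q x = cis (2 * pi * real_of_int x / real q)"

text \<open>Inverse modulo q (arbitrary, namely 0, on non-units).\<close>
definition inv_mod :: "nat \<Rightarrow> int \<Rightarrow> int" where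
  "inv_mod q u = (if coprime u (int q) then (SOME v. [u * v = 1] (mod int q)) else 0)"

definition c0 :: "nat \<Rightarrow> int \<Rightarrow> (zsq \<Rightarrow> complex) \<Rightarrow> nat" where
  "c0 p D \<xi> = conductor p D \<xi> div ram_index p D"

definition kappa :: "nat \<Rightarrow> int \<Rightarrow> (zsq \<Rightarrow> complex) \<Rightarrow> nat" where
  "kappa p D \<xi> = (if int p dvd D then c0 p D \<xi> + 1 else c0 p D \<xi>)"

definition zunit :: "nat \<Rightarrow> int \<Rightarrow> nat \<Rightarrow> zsq \<Rightarrow> bool" where
  "zunit p D k t \<longleftrightarrow> (\<exists>s. [fst (zmul D t s) = 1] (mod int p ^ k) \<and> [snd (zmul D t s) = 0] (mod int p ^ k))"

text \<open>The function H(m, n; p^k).  Residues of O_L/p^k O_L are represented by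
  a + b sqrt D with 0 <= a, b < p^k.\<close>
definition Hfun :: "nat \<Rightarrow> int \<Rightarrow> (zsq \<Rightarrow> complex) \<Rightarrow> complex \<Rightarrow> int \<Rightarrow> int \<Rightarrow> nat \<Rightarrow> complex" where
  "Hfun p D \<xi> \<gamma> m n k =
     (if kappa p D \<xi> \<le> k \<and> \<not> int p dvd (m * n) then
        cnj \<gamma> * complex_of_real (real p powr (- real (disc_exp p D) / 2)) *
        (\<Sum>t \<in> {t \<in> {0..<int p ^ k} \<times> {0..<int p ^ k}.
                  zunit p D k t \<and> [nrm D t = m * n] (mod int p ^ k)}.
            \<xi> t * ep (p ^ k) (- trc t))
      else 0)"

definition Hhat :: "nat \<Rightarrow> int \<Rightarrow> (zsq \<Rightarrow> complex) \<Rightarrow> complex \<Rightarrow> nat \<Rightarrow> (int \<Rightarrow> complex)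
                    \<Rightarrow> int \<Rightarrow> int \<Rightarrow> int \<Rightarrow> complex" where
  "Hhat p D \<xi> \<gamma> k \<psi> a1 a2 a3 =
     complex_of_real (real p powr (- 2 * real k)) *
     (\<Sum>u \<in> {0..<int p ^ k}. \<Sum>x1 \<in> {0..<int p ^ k}. \<Sum>x2 \<in> {0..<int p ^ k}. \<Sum>x3 \<in> {0..<int p ^ k}.
        cnj (\<psi> u) * Hfun p D \<xi> \<gamma> (inv_mod (p ^ k) u * x1 * x2 * x3) 1 k *
        ep (p ^ k) (a1 * x1 + a2 * x2 + a3 * x3 - u * a1 * a2 * a3))"

end

theory Submission
  imports Defs "HOL-Library.Real_Mod"
begin

text \<open>
  Write e(x) for ep (p^k) x.  Since p divides a1 a2 a3, it divides some a_i, and it suffices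
  that the sum over x of H(v x, 1) e(a x) vanishes whenever p | a.  For v prime to p, opening H
  and solving Nm t = v x (mod p^k) for x turns this sum into the sum of
  \<xi>(t) e(a v' Nm t) e(-Tr t) over the t in O_L/p^k with Nm t prime to p, where v v' = 1
  (mod p^k).  As k \<ge> c_0 + 1, \<xi> is trivial on 1 + p^(k-1) O_L, and as p | a, the first two
  factors depend only on t modulo p^(k-1).  Shifting the rational part of t by p^(k-1)
  multiplies the sum by e(-2 p^(k-1)) = exp(-4 \<pi> i / p), which is not 1 because p is odd;
  hence the sum vanishes.
\<close>

section \<open>Additive characters and vanishing sums\<close>

lemma ep_add: "ep q (x + y) = ep q x * ep q y"
  by (simp add: ep_def cis_mult distrib_left add_divide_distrib)

lemma ep_eq_1_iff:
  assumes "0 < q"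
  shows "ep q x = 1 \<longleftrightarrow> int q dvd x"
proof -
  have "ep q x = 1 \<longleftrightarrow> (\<exists>n. 2 * pi * real_of_int x / real q = real_of_int n * (2 * pi))"
    by (simp add: ep_def cis_eq_1_iff)
  also have "\<dots> \<longleftrightarrow> (\<exists>n. x = n * int q)"
  proof (intro ex_cong1)
    fix n :: int
    have "2 * pi * real_of_int x / real q = real_of_int n * (2 * pi) \<longleftrightarrow> real_of_int x = real_of_int (n * int q)"
      using assms by (simp add: field_simps)
    then show "2 * pi * real_of_int x / real q = real_of_int n * (2 * pi) \<longleftrightarrow> x = n * int q"
      by (simp only: of_int_eq_iff)
  qed
  finally show ?thesis
    by (auto simp: dvd_def mult.commute)
qed

lemma ep_cong:
  assumes "[x = y] (mod int q)"
  shows "ep q x = ep q y"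
proof (cases "q = 0")
  case True
  then show ?thesis using assms by (simp add: cong_def)
next
  case False
  then have "ep q (x - y) = 1"
    using assms by (simp add: ep_eq_1_iff cong_iff_dvd_diff)
  then show ?thesis
    using ep_add[of q "x - y" y] by simp
qed

lemma ep_scale:
  assumes "0 < p"
  shows "ep (p * N) (int p * z) = ep N z"
  using assms by (simp add: ep_def mult.assoc)

lemma sum_periodic_shift:
  fixes F :: "int \<Rightarrow> 'a::comm_monoid_add"
  assumes "0 < Q" and periodic: "\<And>x y. [x = y] (mod Q) \<Longrightarrow> F x = F y"
  shows "(\<Sum>y\<in>{0..<Q}. F (y + c)) = (\<Sum>y\<in>{0..<Q}. F y)"
proof -
  have "(\<Sum>y\<in>{0..<Q}. F (y + c)) = (\<Sum>y\<in>{0..<Q}. F ((y + c) mod Q))"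
    by (intro sum.cong refl periodic) (simp add: cong_def)
  also have "\<dots> = (\<Sum>y\<in>{0..<Q}. F y)"
    by (rule sum.reindex_bij_witness[where i = "\<lambda>z. (z - c) mod Q" and j = "\<lambda>y. (y + c) mod Q"])
       (use \<open>0 < Q\<close> in \<open>simp_all add: mod_diff_left_eq mod_add_left_eq\<close>)
  finally show ?thesis .
qed

text \<open>Shifting the summation variable by the period P of f multiplies the sum by ep Q (b P) \<noteq> 1.\<close>
lemma sum_periodic_mult_ep_eq_0:
  fixes f :: "int \<Rightarrow> complex"
  assumes "0 < Q" and "P dvd Q" and "\<not> int Q dvd b * int P"
    and periodic: "\<And>x y. [x = y] (mod int P) \<Longrightarrow> f x = f y"
  shows "(\<Sum>y\<in>{0..<int Q}. f y * ep Q (b * y)) = 0"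
proof -
  define S where "S = (\<Sum>y\<in>{0..<int Q}. f y * ep Q (b * y))"
  have "f x * ep Q (b * x) = f y * ep Q (b * y)" if "[x = y] (mod int Q)" for x y
  proof -
    have "f x = f y"
      by (rule periodic, rule cong_dvd_modulus[OF that]) (use \<open>P dvd Q\<close> in simp)
    moreover have "ep Q (b * x) = ep Q (b * y)"
      using that by (intro ep_cong cong_scalar_left)
    ultimately show ?thesis by simp
  qed
  then have "S = (\<Sum>y\<in>{0..<int Q}. f (y + int P) * ep Q (b * (y + int P)))"
    unfolding S_def using \<open>0 < Q\<close> by (intro sum_periodic_shift[symmetric]) auto
  also have "\<dots> = S * ep Q (b * int P)"
  proof -
    have "f (y + int P) * ep Q (b * (y + int P)) = f y * ep Q (b * y) * ep Q (b * int P)" for y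
      using periodic[of "y + int P" y] by (simp add: cong_def distrib_left ep_add)
    then show ?thesis
      unfolding S_def sum_distrib_right by simp
  qed
  finally have "S * (1 - ep Q (b * int P)) = 0"
    by (simp add: algebra_simps)
  moreover have "ep Q (b * int P) \<noteq> 1"
    using assms by (simp add: ep_eq_1_iff)
  ultimately show ?thesis
    unfolding S_def by simp
qed

section \<open>Congruences in Z[sqrt D] and the level of \<xi>\<close>

definition zcong :: "int \<Rightarrow> zsq \<Rightarrow> zsq \<Rightarrow> bool" where
  "zcong m x y \<longleftrightarrow> [fst x = fst y] (mod m) \<and> [snd x = snd y] (mod m)"

lemma zcong_sym: "zcong m x y \<Longrightarrow> zcong m y x"
  by (simp add: zcong_def cong_sym)

lemma zcong_trans: "zcong m x y \<Longrightarrow> zcong m y z \<Longrightarrow> zcong m x z"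
  by (auto simp: zcong_def intro: cong_trans)

lemma zcong_zmul_left: "zcong m x x' \<Longrightarrow> zcong m (zmul D x y) (zmul D x' y)"
  by (simp add: zcong_def zmul_def cong_add cong_mult cong_refl)

lemma nrm_zcong: "zcong m x y \<Longrightarrow> [nrm D x = nrm D y] (mod m)"
  by (simp add: zcong_def nrm_def cong_diff cong_mult cong_pow cong_refl)

lemma zmul_zero_left [simp]: "zmul D (0, 0) y = (0, 0)"
  and zmul_zero_right [simp]: "zmul D x (0, 0) = (0, 0)"
  by (simp_all add: zmul_def)

lemma zcong_1_nonzero:
  assumes "\<not> is_unit m" and "zcong m x (1, 0)"
  shows "x \<noteq> (0, 0)"
proof
  assume "x = (0, 0)"
  with assms(2) have "[1 = 0] (mod m)"
    by (simp add: zcong_def cong_sym_eq)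
  with assms(1) show False
    by (simp add: cong_0_iff)
qed

lemma exists_zmul_inverse_zcong:
  assumes "coprime (nrm D t) m"
  obtains s where "zcong m (zmul D t s) (1, 0)"
proof -
  obtain M where M: "[nrm D t * M = 1] (mod m)"
    using assms cong_solve_coprime_int by blast
  have "zmul D t (M * fst t, - M * snd t) = (nrm D t * M, 0)"
    by (simp add: zmul_def nrm_def power2_eq_square algebra_simps)
  with M show thesis
    by (intro that[of "(M * fst t, - M * snd t)"]) (simp add: zcong_def cong_refl)
qed

lemma zunit_if_coprime_nrm:
  assumes "coprime (nrm D t) (int p ^ k)"
  shows "zunit p D k t"
proof -
  obtain s where "zcong (int p ^ k) (zmul D t s) (1, 0)"
    using exists_zmul_inverse_zcong[OF assms] .
  then show ?thesis
    unfolding zunit_def zcong_def by (intro exI[of _ s]) simp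
qed

lemma prime_power_not_unit:
  assumes "prime p" and "0 < j"
  shows "\<not> is_unit (int p ^ j)"
proof -
  have "prime (int p)"
    using assms(1) by simp
  then have "\<not> is_unit (int p)"
    using not_prime_unit by blast
  with assms(2) show ?thesis
    by (simp only: is_unit_power_iff) simp
qed

lemma square_if_square_eq_mult_square:
  fixes a b D :: int
  assumes "a^2 = D * b^2" and "b \<noteq> 0"
  obtains r where "D = r^2"
proof -
  define g where "g = gcd a b"
  obtain a' b' where a': "a = a' * g" and b': "b = b' * g" and "coprime a' b'"
    using gcd_coprime_exists[of a b] \<open>b \<noteq> 0\<close> unfolding g_def by auto
  have "g \<noteq> 0" using \<open>b \<noteq> 0\<close> by (simp add: g_def)
  then have eq: "a'^2 = D * b'^2"
    using assms(1) unfolding a' b' by (simp add: power_mult_distrib)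
  then have "b'^2 dvd a'^2" by simp
  moreover have "coprime (a'^2) (b'^2)" using \<open>coprime a' b'\<close> by simp
  ultimately have "is_unit (b'^2)"
    by (metis coprime_common_divisor dvd_refl)
  then have "b'^2 = 1"
    by (simp add: is_unit_power_iff)
  with eq show thesis
    by (intro that[of a']) simp
qed

lemma quad_param_not_square:
  assumes "prime p" and "quad_param p D"
  shows "D \<noteq> r^2"
proof
  assume D: "D = r^2"
  show False
  proof (cases "int p dvd D")
    case False
    moreover have "QuadRes (int p) D"
      unfolding QuadRes_def D by (auto intro: cong_refl)
    ultimately show False using assms(2) by (simp add: quad_param_def)
  next
    case True
    then have "int p dvd r"
      using assms(1) D by (simp add: prime_dvd_power_iff)
    then have "(int p)^2 dvd D"
      using D by simp
    with True show False using assms(2) by (simp add: quad_param_def)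
  qed
qed

lemma nrm_eq_0_iff:
  assumes "prime p" and "quad_param p D"
  shows "nrm D z = 0 \<longleftrightarrow> z = (0, 0)"
proof
  assume "nrm D z = 0"
  then have eq: "(fst z)^2 = D * (snd z)^2"
    by (simp add: nrm_def)
  have "snd z = 0"
  proof (rule ccontr)
    assume "snd z \<noteq> 0"
    with eq obtain r where "D = r^2"
      by (rule square_if_square_eq_mult_square)
    with quad_param_not_square[OF assms] show False by blast
  qed
  with eq show "z = (0, 0)"
    by (cases z) simp
qed (simp add: nrm_def)

lemma vL_ge_if_dvd:
  assumes "prime p" and "quad_param p D" and "y \<noteq> (0, 0)"
    and "int p ^ j dvd fst y" and "int p ^ j dvd snd y"
  shows "ram_index p D * j \<le> vL p D y"
proof -
  obtain a b where a: "fst y = int p ^ j * a" and b: "snd y = int p ^ j * b"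
    using assms(4,5) by (auto simp: dvd_def)
  have "nrm D y = int p ^ (2 * j) * nrm D (a, b)"
    using a b by (simp add: nrm_def power_mult_distrib power_mult algebra_simps)
  moreover have "(a, b) \<noteq> (0, 0)"
    using assms(3) a b by (cases y) auto
  then have "nrm D (a, b) \<noteq> 0"
    using nrm_eq_0_iff[OF assms(1,2)] by blast
  ultimately have "2 * j \<le> multiplicity (int p) (nrm D y)"
    using assms(1) by (subst power_dvd_iff_le_multiplicity[symmetric]) (auto simp: prime_int_iff)
  then have "ram_index p D * (2 * j) div 2 \<le> vL p D y"
    unfolding vL_def by (intro div_le_mono mult_le_mono2)
  then show ?thesis by simp
qed

lemma in_U_if_zcong_1:
  assumes "prime p" and "quad_param p D" and "1 \<le> j" and "0 < c" and "c \<le> ram_index p D * j"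
    and "zcong (int p ^ j) x (1, 0)"
  shows "in_U p D c x"
proof -
  have "\<not> is_unit (int p ^ j)"
    using assms(1,3) by (simp add: prime_power_not_unit)
  then have "x \<noteq> (0, 0)"
    using assms(6) by (rule zcong_1_nonzero)
  moreover have "c \<le> vL p D (fst x - 1, snd x)" if "x \<noteq> (1, 0)"
  proof -
    have "(fst x - 1, snd x) \<noteq> (0, 0)"
      using that by (cases x) auto
    moreover have "int p ^ j dvd fst x - 1" and "int p ^ j dvd snd x"
      using assms(6) by (auto simp: zcong_def cong_iff_dvd_diff cong_0_iff)
    ultimately have "ram_index p D * j \<le> vL p D (fst x - 1, snd x)"
      by (intro vL_ge_if_dvd[OF assms(1,2)]) simp_all
    with assms(5) show ?thesis by linarith
  qed
  ultimately show ?thesis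
    using assms(4) by (auto simp: in_U_def)
qed

lemma smooth_char_eq_1_if_zcong_1:
  assumes "prime p" and "quad_param p D" and "smooth_char p D \<xi>"
    and "1 \<le> j" and "0 < conductor p D \<xi>" and "conductor p D \<xi> \<le> ram_index p D * j"
    and "zcong (int p ^ j) x (1, 0)"
  shows "\<xi> x = 1"
proof -
  from assms(3) obtain c where "\<forall>x. in_U p D c x \<longrightarrow> \<xi> x = 1"
    by (auto simp: smooth_char_def)
  then have "\<forall>x. in_U p D (conductor p D \<xi>) x \<longrightarrow> \<xi> x = 1"
    unfolding conductor_def by (rule LeastI)
  with in_U_if_zcong_1[OF assms(1,2,4,5,6,7)] show ?thesis
    by blast
qed

text \<open>Multiply by an inverse s of t modulo p^j: both t s and t' s are then trivial for \<xi>.\<close>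
lemma smooth_char_zcong:
  assumes "prime p" and "quad_param p D" and "smooth_char p D \<xi>"
    and "1 \<le> j" and "0 < conductor p D \<xi>" and "conductor p D \<xi> \<le> ram_index p D * j"
    and "\<not> int p dvd nrm D t" and "zcong (int p ^ j) t' t"
  shows "\<xi> t' = \<xi> t"
proof -
  have "coprime (nrm D t) (int p ^ j)"
    using assms(1,7) by (intro prime_imp_power_coprime) auto
  then obtain s where s: "zcong (int p ^ j) (zmul D t s) (1, 0)"
    by (rule exists_zmul_inverse_zcong)
  have s': "zcong (int p ^ j) (zmul D t' s) (1, 0)"
    using zcong_trans[OF zcong_zmul_left[OF assms(8)] s] .
  have nonunit: "\<not> is_unit (int p ^ j)"
    using assms(1,4) by (simp add: prime_power_not_unit)
  have "zmul D t s \<noteq> (0, 0)" and "zmul D t' s \<noteq> (0, 0)"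
    using zcong_1_nonzero[OF nonunit s] zcong_1_nonzero[OF nonunit s'] by auto
  then have nonzero: "t \<noteq> (0, 0)" "t' \<noteq> (0, 0)" "s \<noteq> (0, 0)"
    by auto
  have mult: "\<xi> (zmul D x y) = \<xi> x * \<xi> y" if "x \<noteq> (0, 0)" "y \<noteq> (0, 0)" for x y
    using assms(3) that unfolding smooth_char_def by blast
  have "\<xi> t' * \<xi> s = \<xi> t * \<xi> s"
    using smooth_char_eq_1_if_zcong_1[OF assms(1-6)] s s' mult nonzero by metis
  moreover have "\<xi> s \<noteq> 0"
    using assms(3) nonzero unfolding smooth_char_def by blast
  ultimately show ?thesis by simp
qed

section \<open>Twisted sums of H\<close>

lemma sum_if_cong_mult:
  fixes g :: "int \<Rightarrow> 'a::comm_monoid_add"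
  assumes "0 < Q" and inverse: "[v * v' = 1] (mod Q)"
    and periodic: "\<And>x y. [x = y] (mod Q) \<Longrightarrow> g x = g y"
  shows "(\<Sum>x\<in>{0..<Q}. if [n = v * x] (mod Q) then g x else 0) = g (n * v')"
proof -
  have "[n = v * x] (mod Q) \<longleftrightarrow> x = (n * v') mod Q" if "x \<in> {0..<Q}" for x
  proof
    assume "[n = v * x] (mod Q)"
    then have "[n * v' = x * (v * v')] (mod Q)"
      by (metis cong_scalar_right mult.commute mult.left_commute)
    also have "[x * (v * v') = x * 1] (mod Q)"
      using inverse by (rule cong_scalar_left)
    finally show "x = (n * v') mod Q"
      using that by (simp add: cong_def)
  next
    assume "x = (n * v') mod Q"
    then have "[v * x = n * (v * v')] (mod Q)"
      by (simp add: cong_def mod_mult_right_eq mult.left_commute)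
    also have "[n * (v * v') = n * 1] (mod Q)"
      using inverse by (rule cong_scalar_left)
    finally show "[n = v * x] (mod Q)"
      by (simp add: cong_sym)
  qed
  then have "(\<Sum>x\<in>{0..<Q}. if [n = v * x] (mod Q) then g x else 0)
      = (\<Sum>x\<in>{0..<Q}. if x = (n * v') mod Q then g x else 0)"
    by (intro sum.cong) auto
  also have "\<dots> = g ((n * v') mod Q)"
    using \<open>0 < Q\<close> by (simp add: sum.delta')
  also have "\<dots> = g (n * v')"
    by (intro periodic) (simp add: cong_def)
  finally show ?thesis .
qed

lemma sum_ep_trace_eq_0:
  fixes G :: "zsq \<Rightarrow> complex"
  assumes "0 < Q" and "P dvd Q" and "\<not> int Q dvd 2 * int P"
    and periodic: "\<And>t t'. zcong (int P) t t' \<Longrightarrow> G t = G t'"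
  shows "(\<Sum>t\<in>{0..<int Q} \<times> {0..<int Q}. G t * ep Q (- trc t)) = 0"
proof -
  have "(\<Sum>t1\<in>{0..<int Q}. G (t1, t2) * ep Q (- 2 * t1)) = 0" for t2
  proof (rule sum_periodic_mult_ep_eq_0[OF assms(1,2)])
    show "\<not> int Q dvd - 2 * int P"
      using assms(3) by simp
    show "G (x, t2) = G (y, t2)" if "[x = y] (mod int P)" for x y
      using that by (intro periodic) (simp add: zcong_def)
  qed
  then have "(\<Sum>t2\<in>{0..<int Q}. \<Sum>t1\<in>{0..<int Q}. G (t1, t2) * ep Q (- trc (t1, t2))) = 0"
    by (simp add: trc_def)
  then show ?thesis
    unfolding sum.cartesian_product' by (subst sum.swap)
qed

lemma Hfun_twisted_sum_eq:
  assumes "prime p" and "0 < k" and "kappa p D \<xi> \<le> k"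
    and "\<not> int p dvd v" and inverse: "[v * v' = 1] (mod int p ^ k)"
  shows "(\<Sum>x\<in>{0..<int p ^ k}. Hfun p D \<xi> \<gamma> (v * x) 1 k * ep (p ^ k) (a * x)) =
    cnj \<gamma> * complex_of_real (real p powr (- real (disc_exp p D) / 2)) *
    (\<Sum>t\<in>{0..<int p ^ k} \<times> {0..<int p ^ k}.
       (if int p dvd nrm D t then 0 else \<xi> t * ep (p ^ k) (a * v' * nrm D t)) * ep (p ^ k) (- trc t))"
proof -
  define Q where "Q = int p ^ k"
  define B where "B = {0..<Q} \<times> {0..<Q}"
  define C where "C = cnj \<gamma> * complex_of_real (real p powr (- real (disc_exp p D) / 2))"
  define E where "E t = \<xi> t * ep (p ^ k) (- trc t)" for t
  have "0 < Q" and "int p dvd Q"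
    using assms(1,2) by (simp_all add: Q_def prime_gt_0_nat dvd_power)
  have unit_fibre: "(\<not> int p dvd v * x \<and> zunit p D k t \<and> [nrm D t = v * x] (mod Q)) \<longleftrightarrow>
      (\<not> int p dvd nrm D t \<and> [nrm D t = v * x] (mod Q))" for x t
  proof -
    have "int p dvd nrm D t \<longleftrightarrow> int p dvd v * x" if "[nrm D t = v * x] (mod Q)"
      using that \<open>int p dvd Q\<close> by (meson cong_dvd_iff cong_dvd_modulus)
    moreover have "zunit p D k t" if "\<not> int p dvd nrm D t"
      using assms(1) that by (intro zunit_if_coprime_nrm prime_imp_power_coprime) auto
    ultimately show ?thesis by blast
  qed
  have H_unfold: "Hfun p D \<xi> \<gamma> m 1 k = (if int p dvd m then 0
      else C * (\<Sum>t\<in>B. if zunit p D k t \<and> [nrm D t = m] (mod Q) then E t else 0))" for m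
    using assms(3) unfolding Hfun_def C_def E_def B_def Q_def by (simp add: sum.inter_filter)
  have H: "Hfun p D \<xi> \<gamma> (v * x) 1 k * ep (p ^ k) (a * x) =
      C * (\<Sum>t\<in>B. if \<not> int p dvd nrm D t \<and> [nrm D t = v * x] (mod Q) then E t * ep (p ^ k) (a * x) else 0)" for x
  proof -
    have "Hfun p D \<xi> \<gamma> (v * x) 1 k =
        C * (\<Sum>t\<in>B. if \<not> int p dvd v * x \<and> zunit p D k t \<and> [nrm D t = v * x] (mod Q) then E t else 0)"
      by (simp add: H_unfold)
    then show ?thesis
      unfolding unit_fibre
      by (simp only: mult.assoc sum_distrib_right) (intro arg_cong[where f = "(*) C"] sum.cong, auto)
  qed
  have fibre_sum: "(\<Sum>x\<in>{0..<Q}. if [n = v * x] (mod Q) then ep (p ^ k) (a * x) else 0)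
      = ep (p ^ k) (a * (n * v'))" for n
    by (rule sum_if_cong_mult[OF \<open>0 < Q\<close> inverse[folded Q_def]])
       (unfold Q_def, intro ep_cong cong_scalar_left, simp)
  have "(\<Sum>x\<in>{0..<Q}. Hfun p D \<xi> \<gamma> (v * x) 1 k * ep (p ^ k) (a * x))
      = C * (\<Sum>t\<in>B. if int p dvd nrm D t then 0
               else E t * (\<Sum>x\<in>{0..<Q}. if [nrm D t = v * x] (mod Q) then ep (p ^ k) (a * x) else 0))"
    unfolding H sum_distrib_left[symmetric]
    by (subst sum.swap) (auto simp: sum_distrib_left intro!: sum.cong)
  also have "\<dots> = C * (\<Sum>t\<in>B. if int p dvd nrm D t then 0 else E t * ep (p ^ k) (a * (nrm D t * v')))"
    by (simp only: fibre_sum)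
  also have "\<dots> = C * (\<Sum>t\<in>B.
      (if int p dvd nrm D t then 0 else \<xi> t * ep (p ^ k) (a * v' * nrm D t)) * ep (p ^ k) (- trc t))"
    by (intro arg_cong[where f = "(*) C"] sum.cong) (auto simp: E_def ac_simps)
  finally show ?thesis
    unfolding Q_def B_def C_def .
qed

lemma smooth_char_twist_zcong:
  assumes "prime p" and "quad_param p D" and "smooth_char p D \<xi>"
    and "1 \<le> j" and "0 < conductor p D \<xi>" and "conductor p D \<xi> \<le> ram_index p D * j"
    and "zcong (int p ^ j) t t'"
  shows "(if int p dvd nrm D t then 0 else \<xi> t * ep (p ^ Suc j) (int p * b * nrm D t)) =
    (if int p dvd nrm D t' then 0 else \<xi> t' * ep (p ^ Suc j) (int p * b * nrm D t'))"
proof -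
  have cong: "[nrm D t = nrm D t'] (mod int p ^ j)"
    using nrm_zcong assms(7) by simp
  moreover have "int p dvd int p ^ j"
    using assms(4) by (simp add: dvd_power)
  ultimately have "[nrm D t = nrm D t'] (mod int p)"
    by (rule cong_dvd_modulus)
  then have "int p dvd nrm D t \<longleftrightarrow> int p dvd nrm D t'"
    by (rule cong_dvd_iff)
  moreover have "\<xi> t' = \<xi> t" if "\<not> int p dvd nrm D t"
    using smooth_char_zcong[OF assms(1-6) that zcong_sym[OF assms(7)]] .
  moreover have "ep (p ^ Suc j) (int p * b * nrm D t) = ep (p ^ Suc j) (int p * b * nrm D t')"
  proof -
    have "ep (p ^ j) (b * nrm D t) = ep (p ^ j) (b * nrm D t')"
      using cong by (intro ep_cong cong_scalar_left) simp
    then show ?thesis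
      using ep_scale[of p "p ^ j"] assms(1) by (simp add: prime_gt_0_nat mult.assoc)
  qed
  ultimately show ?thesis
    by simp
qed

lemma odd_prime_power_not_dvd:
  assumes "prime p" and "odd p"
  shows "\<not> int (p ^ Suc j) dvd 2 * int (p ^ j)"
proof
  assume "int (p ^ Suc j) dvd 2 * int (p ^ j)"
  then have "int p dvd 2"
    using assms(1) by (simp add: prime_gt_0_nat)
  then have "p dvd 2"
    by presburger
  then have "p = 2"
    using dvd_imp_le[of p 2] prime_ge_2_nat[OF assms(1)] by simp
  with assms(2) show False
    by simp
qed

lemma Hfun_twisted_sum_eq_0:
  assumes "prime p" and "odd p" and "quad_param p D" and "smooth_char p D \<xi>"
    and "ram_index p D dvd conductor p D \<xi>" and "0 < conductor p D \<xi>"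
    and "c0 p D \<xi> + 1 \<le> k" and "int p dvd a"
  shows "(\<Sum>x\<in>{0..<int p ^ k}. Hfun p D \<xi> \<gamma> (v * x) 1 k * ep (p ^ k) (a * x)) = 0"
proof (cases "int p dvd v")
  case True
  then show ?thesis
    by (simp add: Hfun_def)
next
  case False
  define j where "j = k - 1"
  have "conductor p D \<xi> = ram_index p D * c0 p D \<xi>"
    using assms(5) by (simp add: c0_def)
  then have "1 \<le> j" and k: "k = Suc j" and level: "conductor p D \<xi> \<le> ram_index p D * j"
    using assms(6,7) by (auto simp: j_def)
  have "kappa p D \<xi> \<le> k"
    using assms(7) by (simp add: kappa_def)
  have "coprime v (int p ^ k)"
    using assms(1) False by (intro prime_imp_power_coprime) auto
  then obtain v' where inverse: "[v * v' = 1] (mod int p ^ k)"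
    using cong_solve_coprime_int by blast
  obtain a' where a: "a = int p * a'"
    using assms(8) by blast
  define G where "G t = (if int p dvd nrm D t then 0 else \<xi> t * ep (p ^ k) (a * v' * nrm D t))" for t
  have "G t = G t'" if "zcong (int (p ^ j)) t t'" for t t'
    unfolding G_def k a mult.assoc[of "int p" a' v']
    using smooth_char_twist_zcong[OF assms(1,3,4) \<open>1 \<le> j\<close> assms(6) level, of t t' "a' * v'"] that
    by simp
  moreover have "0 < p ^ k" and "p ^ j dvd p ^ k"
    using assms(1) by (simp_all add: k prime_gt_0_nat)
  ultimately have "(\<Sum>t\<in>{0..<int (p ^ k)} \<times> {0..<int (p ^ k)}. G t * ep (p ^ k) (- trc t)) = 0"
    using sum_ep_trace_eq_0 odd_prime_power_not_dvd[OF assms(1,2), of j, folded k] by blast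
  then show ?thesis
    using Hfun_twisted_sum_eq[OF assms(1) _ \<open>kappa p D \<xi> \<le> k\<close> False inverse] k
    by (simp add: G_def)
qed

definition triple_sum ::
    "'a::ab_semigroup_mult set \<Rightarrow> ('a \<Rightarrow> 'b::comm_semiring_0) \<Rightarrow> 'a \<Rightarrow> ('a \<Rightarrow> 'b) \<Rightarrow> ('a \<Rightarrow> 'b) \<Rightarrow> ('a \<Rightarrow> 'b) \<Rightarrow> 'b"
  where "triple_sum A h w f1 f2 f3 =
    (\<Sum>x1\<in>A. \<Sum>x2\<in>A. \<Sum>x3\<in>A. h (w * x1 * x2 * x3) * (f1 x1 * f2 x2 * f3 x3))"

lemma triple_sum_swap12: "triple_sum A h w f1 f2 f3 = triple_sum A h w f2 f1 f3"
  unfolding triple_sum_def by (subst sum.swap) (simp add: ac_simps)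

lemma triple_sum_swap23: "triple_sum A h w f1 f2 f3 = triple_sum A h w f1 f3 f2"
  unfolding triple_sum_def by (rule sum.cong[OF refl], subst sum.swap) (simp add: ac_simps)

lemma triple_sum_eq_0:
  assumes "\<And>c. (\<Sum>x\<in>A. h (c * x) * f3 x) = 0"
  shows "triple_sum A h w f1 f2 f3 = 0"
proof -
  have "(\<Sum>x3\<in>A. h (w * x1 * x2 * x3) * (f1 x1 * f2 x2 * f3 x3))
      = f1 x1 * f2 x2 * (\<Sum>x3\<in>A. h ((w * x1 * x2) * x3) * f3 x3)" for x1 x2
    by (simp add: sum_distrib_left ac_simps)
  then show ?thesis
    by (simp add: triple_sum_def assms)
qed

lemma Hhat_conv_triple_sum:
  "Hhat p D \<xi> \<gamma> k \<psi> a1 a2 a3 = complex_of_real (real p powr (- 2 * real k)) *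
     (\<Sum>u\<in>{0..<int p ^ k}. cnj (\<psi> u) * ep (p ^ k) (- (u * a1 * a2 * a3)) *
        triple_sum {0..<int p ^ k} (\<lambda>m. Hfun p D \<xi> \<gamma> m 1 k) (inv_mod (p ^ k) u)
          (\<lambda>x. ep (p ^ k) (a1 * x)) (\<lambda>x. ep (p ^ k) (a2 * x)) (\<lambda>x. ep (p ^ k) (a3 * x)))"
proof -
  have "ep (p ^ k) (a1 * x1 + a2 * x2 + a3 * x3 - u * a1 * a2 * a3) =
      ep (p ^ k) (- (u * a1 * a2 * a3)) * (ep (p ^ k) (a1 * x1) * ep (p ^ k) (a2 * x2) * ep (p ^ k) (a3 * x3))"
    for u x1 x2 x3
    by (simp only: diff_conv_add_uminus ep_add ac_simps)
  then show ?thesis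
    unfolding Hhat_def triple_sum_def by (simp add: sum_distrib_left ac_simps)
qed

theorem lemma5p2:
  fixes p :: nat and D :: int and \<xi> :: "int \<times> int \<Rightarrow> complex" and \<eta> :: "int \<Rightarrow> complex"
    and \<gamma> :: complex and k :: nat and \<psi> :: "int \<Rightarrow> complex" and a1 a2 a3 :: int
  assumes "prime p" and "odd p"
    and "quad_param p D"
    and "smooth_char p D \<xi>"
    and "is_eta_L p D \<eta>"
    and "\<forall>n. n \<noteq> 0 \<longrightarrow> \<xi> (n, 0) = \<eta> n"
    and "\<exists>x. x \<noteq> (0, 0) \<and> \<xi> (gal x) \<noteq> \<xi> x"
    and "ram_index p D dvd conductor p D \<xi>" and "0 < conductor p D \<xi>"
    and "cmod \<gamma> = 1"
    and "c0 p D \<xi> + 1 \<le> k"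
    and "dirichlet_char (p ^ k) \<psi>"
    and "int p dvd a1 * a2 * a3"
  shows "Hhat p D \<xi> \<gamma> k \<psi> a1 a2 a3 = 0"
proof -
  define h where "h m = Hfun p D \<xi> \<gamma> m 1 k" for m
  define e where "e a x = ep (p ^ k) (a * x)" for a x
  have vanish: "(\<Sum>x\<in>{0..<int p ^ k}. h (c * x) * e a x) = 0" if "int p dvd a" for a c
    unfolding h_def e_def using Hfun_twisted_sum_eq_0[OF assms(1-4,8,9,11) that] .
  have "triple_sum {0..<int p ^ k} h w (e a1) (e a2) (e a3) = 0" for w
  proof -
    have "prime (int p)"
      using assms(1) by simp
    then consider "int p dvd a1" | "int p dvd a2" | "int p dvd a3"
      using assms(13) by (auto simp: prime_dvd_mult_iff)
    then show ?thesis
    proof cases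
      case 1
      then show ?thesis
        by (metis triple_sum_swap12 triple_sum_swap23 triple_sum_eq_0 vanish)
    next
      case 2
      then show ?thesis
        by (metis triple_sum_swap23 triple_sum_eq_0 vanish)
    next
      case 3
      then show ?thesis
        by (rule triple_sum_eq_0[OF vanish])
    qed
  qed
  then show ?thesis
    unfolding Hhat_conv_triple_sum h_def [abs_def] e_def [abs_def] by simp
qed

end
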